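(* Let $\mathcal X$ be locally convex and let $\rho$ be proper, convex and lower semicontinuous. Then $\mathcal D$ is nonempty and $$\rho(X)=\sup_{\psi\in\mathcal D}\{\sigma_{\mathcal A}(\psi)+\sigma_{\mathcal P,V_0,V_1}(\psi)-\psi(X)\}\quad\text{for all }X\in\mathcal X.$$
   Context: Standing setup: Let $\mathcal{X}$ be a real topological vector space partially ordered by a convex cone $\mathcal{X}_+\subset\mathcal X$; write $X\ge Y$ iff $X-Y\in\mathcal X_+$. Fix $N\in\mathbb N$ and: a set $\mathcal P\subset\mathbb R^N$ with $0\in\mathcal P$; a function $V_0:\mathbb R^N\to\mathbb R$ with $V_0(0)=0$ and $V_0(x)\ge -V_0(-x)$ for all $x\in\mathbb R^N$; a map $V_1:\mathbb R^N\to\mathcal X$ with $V_1(0)=0$ and $V_1(x)\le -V_1(-x)$ for all $x\in\mathbb R^N$; a set $\mathcal A\subset\mathcal X$ with $0\in\mathcal A$ and $\mathcal A+\mathcal X_+\subset\mathcal A$. The risk measure is $\rho:\mathcal X\to[-\infty,\infty]$, $\rho(X)=\inf\{V_0(x): x\in\mathcal P,\ X+V_1(x)\in\mathcal A\}$, with $\inf\emptyset=+\infty$. $\rho$ is proper if it never takes the value $-\infty$ and is not identically $+\infty$. Duality notation: $\mathcal X'$ is the topological dual of $\mathcal X$. For $\psi\in\mathcal X'$: $\sigma_{\mathcal A}(\psi)=\inf_{X\in\mathcal A}\psi(X)$ and $\sigma_{\mathcal P,V_0,V_1}(\psi)=\inf_{x\in\mathcal P}\{V_0(x)-\psi(V_1(x))\}$.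 $\mathcal D=\{\psi\in\mathcal X':\sigma_{\mathcal A}(\psi)>-\infty,\ \sigma_{\mathcal P,V_0,V_1}(\psi)>-\infty\}$. *)

theory Defs
  imports "HOL-Analysis.Analysis"
begin

definition tvs :: "'x::{real_vector,topological_space} itself \<Rightarrow> bool" where
  "tvs _ \<longleftrightarrow> continuous_on UNIV (\<lambda>p::'x \<times> 'x. fst p + snd p)
           \<and> continuous_on UNIV (\<lambda>p::real \<times> 'x. fst p *\<^sub>R snd p)"

definition locally_convex_tvs :: "'x::{real_vector,topological_space} itself \<Rightarrow> bool" where
  "locally_convex_tvs T \<longleftrightarrow> tvs T \<and>
     (\<forall>x::'x. \<forall>U. open U \<and> x \<in> U \<longrightarrow> (\<exists>V. open V \<and> convex V \<and> x \<in> V \<and> V \<subseteq> U))"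

definition topdual :: "('x::{real_vector,topological_space} \<Rightarrow> real) set" where
  "topdual = {\<psi>. linear \<psi> \<and> continuous_on UNIV \<psi>}"

text \<open>The risk measure rho(X) = inf { V0 x : x in P, X + V1 x in A }, inf of empty = +infinity.\<close>

definition risk :: "(real^'n) set \<Rightarrow> (real^'n \<Rightarrow> real) \<Rightarrow> (real^'n \<Rightarrow> 'x::real_vector)
                     \<Rightarrow> 'x set \<Rightarrow> 'x \<Rightarrow> ereal" where
  "risk P V0 V1 A X = Inf {ereal (V0 x) | x. x \<in> P \<and> X + V1 x \<in> A}"

definition proper_fun :: "('x \<Rightarrow> ereal) \<Rightarrow> bool" where
  "proper_fun f \<longleftrightarrow> (\<forall>X. f X \<noteq> -\<infinity>) \<and> (\<exists>X. f X \<noteq> \<infinity>)"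

definition convex_efun :: "('x::real_vector \<Rightarrow> ereal) \<Rightarrow> bool" where
  "convex_efun f \<longleftrightarrow> convex {(X, t::real). f X \<le> ereal t}"

definition lsc_efun :: "('x::topological_space \<Rightarrow> ereal) \<Rightarrow> bool" where
  "lsc_efun f \<longleftrightarrow> (\<forall>c::real. closed {X. f X \<le> ereal c})"

definition sigmaA :: "'x set \<Rightarrow> ('x \<Rightarrow> real) \<Rightarrow> ereal" where
  "sigmaA A \<psi> = Inf {ereal (\<psi> X) | X. X \<in> A}"

definition sigmaPV :: "(real^'n) set \<Rightarrow> (real^'n \<Rightarrow> real) \<Rightarrow> (real^'n \<Rightarrow> 'x)
                       \<Rightarrow> ('x \<Rightarrow> real) \<Rightarrow> ereal" where
  "sigmaPV P V0 V1 \<psi> = Inf {ereal (V0 x - \<psi> (V1 x)) | x. x \<in> P}"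

definition dualD :: "'x::{real_vector,topological_space} set \<Rightarrow> (real^'n) set
                     \<Rightarrow> (real^'n \<Rightarrow> real) \<Rightarrow> (real^'n \<Rightarrow> 'x) \<Rightarrow> ('x \<Rightarrow> real) set" where
  "dualD A P V0 V1 = {\<psi> \<in> topdual. sigmaA A \<psi> > -\<infinity> \<and> sigmaPV P V0 V1 \<psi> > -\<infinity>}"

end

theory Submission
  imports Defs
begin

text \<open>Weak duality is immediate: for \<open>\<psi> \<in> D\<close>, \<open>X + V1 x \<in> A\<close> and \<open>x \<in> P\<close> give
  \<open>\<psi> X + \<psi> (V1 x) \<ge> \<sigma>_A \<psi>\<close> and \<open>V0 x - \<psi> (V1 x) \<ge> \<sigma>_P \<psi>\<close>. For the converse, a proper convex
  lower semicontinuous function on a locally convex space is the supremum of its continuous affine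
  minorants: a point strictly below the graph is separated from the epigraph by Hahn--Banach
  (applied to a Minkowski functional; Hahn--Banach itself comes from Zorn's lemma, since a minimal
  sublinear functional is linear). If \<open>\<phi> + \<beta>\<close> is a continuous affine minorant of \<open>\<rho>\<close>, then
  \<open>\<beta> + \<phi> (Y - V1 x) \<le> \<rho> (Y - V1 x) \<le> V0 x\<close> for \<open>Y \<in> A\<close> and \<open>x \<in> P\<close>, so \<open>-\<phi> \<in> D\<close> and its
  dual value at \<open>X\<close> is at least \<open>\<phi> X + \<beta>\<close>.\<close>

section \<open>Sublinear functionals and the Hahn--Banach theorem\<close>

definition sublinear :: "('a::real_vector \<Rightarrow> real) \<Rightarrow> bool" where
  "sublinear p \<longleftrightarrow>
     (\<forall>x y. p (x + y) \<le> p x + p y) \<and> (\<forall>c x. 0 \<le> c \<longrightarrow> p (c *\<^sub>R x) = c * p x)"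

lemma sublinear_add: "sublinear p \<Longrightarrow> p (x + y) \<le> p x + p y"
  by (simp add: sublinear_def)

lemma sublinear_scaleR: "sublinear p \<Longrightarrow> 0 \<le> c \<Longrightarrow> p (c *\<^sub>R x) = c * p x"
  by (simp add: sublinear_def)

lemma sublinear_zero: "sublinear p \<Longrightarrow> p 0 = 0"
  using sublinear_scaleR[of p 0 0] by simp

lemma sublinear_neg_le: "sublinear p \<Longrightarrow> - p (- x) \<le> p x"
  using sublinear_add[of p x "- x"] sublinear_zero[of p] by simp

lemma sublinear_lower_bound: "sublinear q \<Longrightarrow> q \<le> p \<Longrightarrow> - p (- x) \<le> q x"
  using sublinear_neg_le[of q x] le_funD[of q p "- x"] by linarith

lemma sublinearI:
  assumes add: "\<And>x y. p (x + y) \<le> p x + p y" and zero: "p 0 = 0"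
    and scale: "\<And>c x. 0 < c \<Longrightarrow> p (c *\<^sub>R x) \<le> c * p x"
  shows "sublinear p"
proof -
  have "p (c *\<^sub>R x) = c * p x" if "0 < c" for c x
  proof (rule antisym)
    show "p (c *\<^sub>R x) \<le> c * p x" using scale that .
    have "p x = p ((1 / c) *\<^sub>R (c *\<^sub>R x))" using that by simp
    also have "\<dots> \<le> (1 / c) * p (c *\<^sub>R x)" using scale[of "1 / c" "c *\<^sub>R x"] that by simp
    finally show "c * p x \<le> p (c *\<^sub>R x)" using that by (simp add: field_simps)
  qed
  then show ?thesis
    using add zero by (auto simp: sublinear_def le_less)
qed

definition sublinear_shift :: "('a::real_vector \<Rightarrow> real) \<Rightarrow> 'a \<Rightarrow> 'a \<Rightarrow> real" where
  "sublinear_shift p y x = (INF t\<in>{0..}. p (x + t *\<^sub>R y) - t * p y)"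

lemma sublinear_shift_le:
  assumes p: "sublinear p" and "0 \<le> t"
  shows "sublinear_shift p y x \<le> p (x + t *\<^sub>R y) - t * p y"
  unfolding sublinear_shift_def
proof (rule cINF_lower)
  have "- p (- x) \<le> p (x + s *\<^sub>R y) - s * p y" if "0 \<le> s" for s
    using sublinear_add[OF p, of "x + s *\<^sub>R y" "- x"] sublinear_scaleR[OF p that] by simp
  then show "bdd_below ((\<lambda>s. p (x + s *\<^sub>R y) - s * p y) ` {0..})"
    by (intro bdd_belowI2) auto
qed (use assms in simp)

lemma sublinear_shift_greatest:
  "(\<And>t. 0 \<le> t \<Longrightarrow> m \<le> p (x + t *\<^sub>R y) - t * p y) \<Longrightarrow> m \<le> sublinear_shift p y x"
  unfolding sublinear_shift_def by (rule cINF_greatest) auto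

lemma sublinear_shift_le_self: "sublinear p \<Longrightarrow> sublinear_shift p y \<le> p"
  using sublinear_shift_le[of p 0] by (simp add: le_fun_def)

lemma sublinear_shift_sublinear:
  assumes p: "sublinear p"
  shows "sublinear (sublinear_shift p y)"
proof (rule sublinearI)
  let ?s = "sublinear_shift p y"
  show "?s (x1 + x2) \<le> ?s x1 + ?s x2" for x1 x2
  proof -
    have "?s (x1 + x2) \<le> (p (x1 + t1 *\<^sub>R y) - t1 * p y) + (p (x2 + t2 *\<^sub>R y) - t2 * p y)"
      if "0 \<le> t1" "0 \<le> t2" for t1 t2
    proof -
      have "?s (x1 + x2) \<le> p (x1 + x2 + (t1 + t2) *\<^sub>R y) - (t1 + t2) * p y"
        using sublinear_shift_le[OF p] that by simp
      also have "x1 + x2 + (t1 + t2) *\<^sub>R y = (x1 + t1 *\<^sub>R y) + (x2 + t2 *\<^sub>R y)"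
        by (simp add: algebra_simps)
      finally show ?thesis
        using sublinear_add[OF p, of "x1 + t1 *\<^sub>R y" "x2 + t2 *\<^sub>R y"] by (simp add: algebra_simps)
    qed
    then have "?s (x1 + x2) - (p (x2 + t2 *\<^sub>R y) - t2 * p y) \<le> ?s x1" if "0 \<le> t2" for t2
      using that by (intro sublinear_shift_greatest) force
    then have "?s (x1 + x2) - ?s x1 \<le> ?s x2"
      by (intro sublinear_shift_greatest) force
    then show ?thesis by simp
  qed
  show "?s 0 = 0"
  proof -
    have "(\<lambda>t. p (0 + t *\<^sub>R y) - t * p y) ` {0..} = {0}"
      using sublinear_scaleR[OF p] by force
    then show ?thesis by (simp add: sublinear_shift_def)
  qed
  show "?s (c *\<^sub>R x) \<le> c * ?s x" if "0 < c" for c x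
  proof -
    have "?s (c *\<^sub>R x) / c \<le> ?s x"
    proof (rule sublinear_shift_greatest)
      fix t :: real assume "0 \<le> t"
      then have "?s (c *\<^sub>R x) \<le> p (c *\<^sub>R x + (c * t) *\<^sub>R y) - (c * t) * p y"
        using sublinear_shift_le[OF p] that by simp
      also have "c *\<^sub>R x + (c * t) *\<^sub>R y = c *\<^sub>R (x + t *\<^sub>R y)"
        by (simp add: algebra_simps)
      also have "p \<dots> = c * p (x + t *\<^sub>R y)"
        using sublinear_scaleR[OF p] that by simp
      finally show "?s (c *\<^sub>R x) / c \<le> p (x + t *\<^sub>R y) - t * p y"
        using that by (simp add: field_simps)
    qed
    then show ?thesis using that by (simp add: field_simps)
  qed
qed

text \<open>The shift of a minimal \<open>q\<close> in direction \<open>y\<close> is again sublinear and below \<open>q\<close>, hence equal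
  to \<open>q\<close>; this forces \<open>q (x + y) = q x + q y\<close>.\<close>

lemma minimal_sublinear_linear:
  assumes q: "sublinear q" and minimal: "\<And>q'. sublinear q' \<Longrightarrow> q' \<le> q \<Longrightarrow> q' = q"
  shows "linear q"
proof -
  have add: "q (x + y) = q x + q y" for x y
  proof -
    have "sublinear_shift q y = q"
      using minimal sublinear_shift_sublinear[OF q] sublinear_shift_le_self[OF q] by blast
    then have "q x \<le> q (x + y) - q y"
      using sublinear_shift_le[OF q, of 1 y x] by simp
    then show ?thesis using sublinear_add[OF q, of x y] by simp
  qed
  have neg: "q (- x) = - q x" for x
    using add[of x "- x"] sublinear_zero[OF q] by simp
  show ?thesis
  proof (rule linearI)
    show "q (c *\<^sub>R x) = c *\<^sub>R q x" for c x
    proof (cases "0 \<le> c")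
      case False
      then have "q (c *\<^sub>R x) = (- c) * q (- x)"
        using sublinear_scaleR[OF q, of "- c" "- x"] by simp
      then show ?thesis using neg by simp
    qed (simp add: sublinear_scaleR[OF q])
  qed (rule add)
qed

lemma sublinear_INF_chain:
  assumes ne: "C \<noteq> {}" and C: "\<And>q. q \<in> C \<Longrightarrow> sublinear q \<and> q \<le> p"
    and chain: "\<And>q1 q2. q1 \<in> C \<Longrightarrow> q2 \<in> C \<Longrightarrow> q1 \<le> q2 \<or> q2 \<le> q1"
  shows "sublinear (\<lambda>x. INF q\<in>C. q x)"
proof (rule sublinearI)
  let ?r = "\<lambda>x. INF q\<in>C. q x"
  have lower: "?r x \<le> q x" if "q \<in> C" for q x
  proof (rule cINF_lower[OF _ that])
    have "- p (- x) \<le> q x" if "q \<in> C" for q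
      using C[OF that] sublinear_lower_bound by blast
    then show "bdd_below ((\<lambda>q. q x) ` C)" by (intro bdd_belowI2)
  qed
  have greatest: "m \<le> ?r x" if "\<And>q. q \<in> C \<Longrightarrow> m \<le> q x" for m x
    using ne that by (rule cINF_greatest)
  show "?r (x + y) \<le> ?r x + ?r y" for x y
  proof -
    have "?r (x + y) \<le> q1 x + q2 y" if q1: "q1 \<in> C" and q2: "q2 \<in> C" for q1 q2
    proof -
      obtain q where "q \<in> C" "q \<le> q1" "q \<le> q2" using chain[OF q1 q2] q1 q2 by blast
      then have "?r (x + y) \<le> q x + q y"
        using lower[of q "x + y"] sublinear_add[of q x y] C by force
      also have "\<dots> \<le> q1 x + q2 y"
        using \<open>q \<le> q1\<close> \<open>q \<le> q2\<close> by (simp add: add_mono le_funD)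
      finally show ?thesis .
    qed
    then have "?r (x + y) - q2 y \<le> ?r x" if "q2 \<in> C" for q2
      using that by (intro greatest) force
    then have "?r (x + y) - ?r x \<le> ?r y"
      by (intro greatest) force
    then show ?thesis by simp
  qed
  show "?r 0 = 0"
  proof -
    have "(\<lambda>q. q 0) ` C = {0}" using ne C sublinear_zero by fastforce
    then show ?thesis by simp
  qed
  show "?r (c *\<^sub>R x) \<le> c * ?r x" if "0 < c" for c x
  proof -
    have "?r (c *\<^sub>R x) \<le> c * q x" if "q \<in> C" for q
      using lower[OF that, of "c *\<^sub>R x"] C[OF that] sublinear_scaleR[of q c x] \<open>0 < c\<close> by simp
    then have "?r (c *\<^sub>R x) / c \<le> ?r x"
      using that by (intro greatest) (simp add: field_simps)
    then show ?thesis using that by (simp add: field_simps)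
  qed
qed

lemma exists_minimal_sublinear_below:
  assumes "sublinear p"
  shows "\<exists>q. sublinear q \<and> q \<le> p \<and> (\<forall>q'. sublinear q' \<longrightarrow> q' \<le> q \<longrightarrow> q' = q)"
proof -
  define Q where "Q = {q. sublinear q \<and> q \<le> p}"
  let ?R = "relation_of (\<lambda>q1 q2. q2 \<le> q1) Q"
  have order: "partial_order_on Q ?R"
    by (rule partial_order_on_relation_ofI) auto
  have chain_bounded: "\<exists>u\<in>Q. \<forall>q\<in>C. u \<le> q" if C: "C \<in> Chains ?R" for C
  proof (cases "C = {}")
    case True
    then show ?thesis using assms by (auto simp: Q_def)
  next
    case False
    have CQ: "C \<subseteq> Q" using Chains_relation_of[OF C] .
    have "q1 \<le> q2 \<or> q2 \<le> q1" if "q1 \<in> C" "q2 \<in> C" for q1 q2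
      using C that by (auto simp: Chains_def relation_of_def)
    then have "sublinear (\<lambda>x. INF q\<in>C. q x)"
      using False CQ by (intro sublinear_INF_chain[where p = p]) (auto simp: Q_def)
    moreover have lower: "(\<lambda>x. INF q\<in>C. q x) \<le> q" if "q \<in> C" for q
      unfolding le_fun_def
    proof
      fix x
      have "- p (- x) \<le> q' x" if "q' \<in> C" for q'
        using CQ that sublinear_lower_bound by (auto simp: Q_def)
      then show "(INF q\<in>C. q x) \<le> q x"
        using that by (intro cINF_lower bdd_belowI2) auto
    qed
    moreover obtain q0 where "q0 \<in> C" using False by blast
    then have "(\<lambda>x. INF q\<in>C. q x) \<le> p"
      using lower CQ by (auto simp: Q_def intro: order_trans)
    ultimately show ?thesis by (auto simp: Q_def)
  qed
  obtain q where "q \<in> Q" "\<forall>q'\<in>Q. q' \<le> q \<longrightarrow> q' = q"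
    using predicate_Zorn[OF order chain_bounded] by blast
  then show ?thesis by (auto simp: Q_def intro: order_trans)
qed

theorem sublinear_dominates_linear:
  assumes p: "sublinear p"
  shows "\<exists>L. linear L \<and> L \<le> p \<and> L y = p y"
proof -
  obtain L where L: "sublinear L" "L \<le> sublinear_shift p y"
    and minimal: "\<And>q'. sublinear q' \<Longrightarrow> q' \<le> L \<Longrightarrow> q' = L"
    using exists_minimal_sublinear_below[OF sublinear_shift_sublinear[OF p]] by blast
  have lin: "linear L" using minimal_sublinear_linear[OF L(1) minimal] .
  have "L \<le> p" using L(2) sublinear_shift_le_self[OF p] by (rule order_trans)
  moreover have "- L y \<le> - p y"
    using le_funD[OF L(2), of "- y"] sublinear_shift_le[OF p, of 1 y "- y"] sublinear_zero[OF p]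
      linear_neg[OF lin] by simp
  ultimately show ?thesis using lin by (auto simp: le_fun_def intro: antisym)
qed

section \<open>Minkowski functionals\<close>

definition minkowski_functional :: "'a::real_vector set \<Rightarrow> 'a \<Rightarrow> real" where
  "minkowski_functional S x = Inf {l. 0 < l \<and> (1 / l) *\<^sub>R x \<in> S}"

context
  fixes S :: "'a::real_vector set"
  assumes convex: "convex S" and zero: "0 \<in> S"
    and radial: "\<And>x. \<exists>l>0. (1 / l) *\<^sub>R x \<in> S"
begin

private lemma minkowski_functional_le:
  "0 < l \<Longrightarrow> (1 / l) *\<^sub>R x \<in> S \<Longrightarrow> minkowski_functional S x \<le> l"
  unfolding minkowski_functional_def by (rule cInf_lower) (auto intro: bdd_belowI[where m = 0])

private lemma minkowski_functional_greatest:
  "(\<And>l. 0 < l \<Longrightarrow> (1 / l) *\<^sub>R x \<in> S \<Longrightarrow> m \<le> l) \<Longrightarrow> m \<le> minkowski_functional S x"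
  unfolding minkowski_functional_def using radial[of x] by (intro cInf_greatest) auto

lemma minkowski_functional_le_one: "x \<in> S \<Longrightarrow> minkowski_functional S x \<le> 1"
  using minkowski_functional_le[of 1 x] by simp

lemma minkowski_functional_ge_one: "x \<notin> S \<Longrightarrow> 1 \<le> minkowski_functional S x"
proof (rule minkowski_functional_greatest, rule ccontr)
  fix l :: real assume x: "x \<notin> S" and l: "0 < l" "(1 / l) *\<^sub>R x \<in> S" "\<not> 1 \<le> l"
  then have "l *\<^sub>R ((1 / l) *\<^sub>R x) + (1 - l) *\<^sub>R 0 \<in> S"
    using zero by (intro convexD[OF convex]) auto
  with x l show False by simp
qed

lemma minkowski_functional_sublinear: "sublinear (minkowski_functional S)"
proof (rule sublinearI)
  let ?g = "minkowski_functional S"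
  show "?g (x + y) \<le> ?g x + ?g y" for x y
  proof -
    have sum: "?g (x + y) \<le> l1 + l2"
      if l1: "0 < l1" "(1 / l1) *\<^sub>R x \<in> S" and l2: "0 < l2" "(1 / l2) *\<^sub>R y \<in> S" for l1 l2
    proof (rule minkowski_functional_le)
      have "l1 / (l1 + l2) + l2 / (l1 + l2) = 1"
        using l1 l2 by (simp add: add_divide_distrib[symmetric])
      then have "(l1 / (l1 + l2)) *\<^sub>R ((1 / l1) *\<^sub>R x) + (l2 / (l1 + l2)) *\<^sub>R ((1 / l2) *\<^sub>R y) \<in> S"
        using l1 l2 by (intro convexD[OF convex]) simp_all
      then show "(1 / (l1 + l2)) *\<^sub>R (x + y) \<in> S"
        using l1 l2 by (simp add: scaleR_add_right)
    qed (use l1 l2 in simp)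
    have "?g (x + y) - l2 \<le> ?g x" if "0 < l2" "(1 / l2) *\<^sub>R y \<in> S" for l2
      using sum that by (intro minkowski_functional_greatest) force
    then have "?g (x + y) - ?g x \<le> ?g y"
      by (intro minkowski_functional_greatest) force
    then show ?thesis by simp
  qed
  show "?g 0 = 0"
  proof -
    have "{l. 0 < l \<and> (1 / l) *\<^sub>R 0 \<in> S} = {0<..}" using zero by auto
    then show ?thesis by (simp add: minkowski_functional_def)
  qed
  show "?g (c *\<^sub>R x) \<le> c * ?g x" if "0 < c" for c x
  proof -
    have "?g (c *\<^sub>R x) / c \<le> ?g x"
    proof (rule minkowski_functional_greatest)
      fix l assume "0 < l" "(1 / l) *\<^sub>R x \<in> S"
      then have "?g (c *\<^sub>R x) \<le> c * l"
        using that by (intro minkowski_functional_le) auto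
      then show "?g (c *\<^sub>R x) / c \<le> l" using that by (simp add: field_simps)
    qed
    then show ?thesis using that by (simp add: field_simps)
  qed
qed

lemma convex_radial_separation:
  assumes "d \<notin> S"
  shows "\<exists>L :: 'a \<Rightarrow> real. linear L \<and> (\<forall>x\<in>S. L x \<le> 1) \<and> 1 \<le> L d"
proof -
  obtain L where L: "linear L" "L \<le> minkowski_functional S" "L d = minkowski_functional S d"
    using sublinear_dominates_linear[OF minkowski_functional_sublinear] by blast
  show ?thesis
  proof (intro exI conjI ballI)
    show "L x \<le> 1" if "x \<in> S" for x
      using le_funD[OF L(2), of x] minkowski_functional_le_one[OF that] by linarith
    show "1 \<le> L d"
      using L(3) minkowski_functional_ge_one[OF assms] by simp
  qed (rule L(1))
qed

end

section \<open>Separation in topological vector spaces\<close>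

lemma tvs_continuous_affine:
  assumes "tvs TYPE('x::{real_vector,topological_space})"
  shows "continuous_on UNIV (\<lambda>x::'x. c *\<^sub>R (x - b))"
proof -
  have add: "continuous_on UNIV (\<lambda>p::'x \<times> 'x. fst p + snd p)"
    and scale: "continuous_on UNIV (\<lambda>p::real \<times> 'x. fst p *\<^sub>R snd p)"
    using assms by (simp_all add: tvs_def)
  have "continuous_on UNIV (\<lambda>x::'x. x + - b)"
    using continuous_on_compose2[OF add, of UNIV "\<lambda>x. (x, - b)"] by (simp add: continuous_intros)
  then have "continuous_on UNIV (\<lambda>x::'x. (c, x - b))"
    by (intro continuous_on_Pair continuous_on_const) simp
  from continuous_on_compose2[OF scale this] show ?thesis by simp
qed

lemma tvs_open_nbhd_radial:
  fixes U :: "'x::{real_vector,topological_space} set"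
  assumes "tvs TYPE('x)" and "open U" and "0 \<in> U"
  shows "\<exists>r>0. \<forall>a. \<bar>a\<bar> < r \<longrightarrow> a *\<^sub>R x \<in> U"
proof -
  have scale: "continuous_on UNIV (\<lambda>p::real \<times> 'x. fst p *\<^sub>R snd p)"
    using assms(1) by (simp add: tvs_def)
  have "continuous_on UNIV (\<lambda>a::real. (a, x))"
    by (intro continuous_on_Pair continuous_on_const continuous_on_id)
  from continuous_on_compose2[OF scale this]
  have "continuous_on UNIV (\<lambda>a::real. a *\<^sub>R x)" by simp
  then have "open ((\<lambda>a::real. a *\<^sub>R x) -` U)"
    using assms(2) by (simp add: continuous_on_open_vimage)
  moreover have "0 \<in> (\<lambda>a::real. a *\<^sub>R x) -` U" using assms(3) by simp
  ultimately obtain r where "0 < r" "ball 0 r \<subseteq> (\<lambda>a::real. a *\<^sub>R x) -` U"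
    by (meson openE)
  then show ?thesis by (intro exI[of _ r]) (auto simp: dist_real_def subset_iff)
qed

lemma tvs_linear_continuous_if_bounded_on_nbhd:
  fixes \<phi> :: "'x::{real_vector,topological_space} \<Rightarrow> real"
  assumes tvs: "tvs TYPE('x)" and lin: "linear \<phi>"
    and U: "open U" "0 \<in> U" and bounded: "\<And>u. u \<in> U \<Longrightarrow> \<phi> u \<le> 1"
  shows "continuous_on UNIV \<phi>"
proof -
  have "open (\<phi> -` B)" if "open B" for B
    unfolding open_subopen[of "\<phi> -` B"]
  proof
    fix x0 assume "x0 \<in> \<phi> -` B"
    then obtain e where e: "0 < e" "ball (\<phi> x0) e \<subseteq> B"
      using \<open>open B\<close> by (meson openE vimageE)
    define T where
      "T = (\<lambda>x. (2 / e) *\<^sub>R (x - x0)) -` U \<inter> (\<lambda>x. (- 2 / e) *\<^sub>R (x - x0)) -` U"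
    have "open ((\<lambda>x. c *\<^sub>R (x - x0)) -` U)" for c
      using tvs_continuous_affine[OF tvs, of c x0] U(1) by (simp add: continuous_on_open_vimage)
    then have "open T" unfolding T_def by (intro open_Int)
    moreover have "x0 \<in> T" using U(2) by (simp add: T_def)
    moreover have "T \<subseteq> \<phi> -` B"
    proof
      fix x assume "x \<in> T"
      then have "\<phi> ((2 / e) *\<^sub>R (x - x0)) \<le> 1" "\<phi> ((- 2 / e) *\<^sub>R (x - x0)) \<le> 1"
        by (auto simp: T_def intro: bounded)
      then have "(2 / e) * (\<phi> x - \<phi> x0) \<le> 1" "- ((2 / e) * (\<phi> x - \<phi> x0)) \<le> 1"
        by (simp_all add: linear_scale[OF lin] linear_diff[OF lin] linear_neg[OF lin])
      then have "\<bar>\<phi> x - \<phi> x0\<bar> < e"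
        using e(1) by (simp add: field_simps abs_less_iff)
      then show "x \<in> \<phi> -` B" using e(2) by (auto simp: dist_real_def abs_minus_commute)
    qed
    ultimately show "\<exists>T. open T \<and> x0 \<in> T \<and> T \<subseteq> \<phi> -` B" by blast
  qed
  then show ?thesis by (simp add: continuous_on_open_vimage)
qed

lemma tvs_box_radial:
  fixes U :: "'x::{real_vector,topological_space} set"
    and w :: "'x \<times> real"
  assumes "tvs TYPE('x)" and "open U" and "0 \<in> U" and "0 < \<delta>"
  shows "\<exists>l>0. (1 / l) *\<^sub>R w \<in> U \<times> ball 0 \<delta>"
proof -
  obtain x s where w: "w = (x, s)" by (cases w)
  obtain r where r: "0 < r" "\<And>a. \<bar>a\<bar> < r \<Longrightarrow> a *\<^sub>R x \<in> U"
    using tvs_open_nbhd_radial[OF assms(1-3)] by blast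
  define l where "l = 1 / r + \<bar>s\<bar> / \<delta> + 1"
  have "1 / r < l" "\<bar>s\<bar> / \<delta> < l" "0 < l"
    using r(1) assms(4) by (simp_all add: l_def add_pos_nonneg add_nonneg_pos)
  then have "1 / l < r" "\<bar>s / l\<bar> < \<delta>"
    using r(1) assms(4) by (simp_all add: field_simps)
  then show ?thesis
    using r(2) \<open>0 < l\<close> by (intro exI[of _ l]) (simp add: w dist_real_def)
qed

text \<open>Hahn--Banach is applied to the Minkowski functional of \<open>E - e1 + U \<times> ball 0 \<delta>\<close>; the
  resulting functional is continuous in the first component because it is bounded on \<open>U\<close>.\<close>

lemma tvs_separation_from_box_nbhd:
  fixes E :: "('x::{real_vector,topological_space} \<times> real) set"
  assumes tvs: "tvs TYPE('x)" and U: "open U" "convex U" "0 \<in> U" and "0 < \<delta>"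
    and E: "convex E" "e1 \<in> E"
    and disjoint: "\<And>b. b \<in> U \<times> ball 0 \<delta> \<Longrightarrow> (x0, t0) - b \<notin> E"
  shows "\<exists>\<phi>\<in>topdual. \<exists>c \<alpha>. (\<forall>x s. (x, s) \<in> E \<longrightarrow> \<phi> x + c * s \<le> \<alpha>) \<and> \<alpha> < \<phi> x0 + c * t0"
proof -
  define B where "B = U \<times> ball (0::real) \<delta>"
  define G where "G = (\<lambda>e. e - e1) ` E + B"
  define d where "d = (x0, t0) - e1"
  have B_G: "b \<in> G" if "b \<in> B" for b
    using set_plus_intro[OF imageI[OF E(2)] that, of "\<lambda>e. e - e1"] by (simp add: G_def)
  have B_radial: "\<exists>l>0. (1 / l) *\<^sub>R w \<in> B" for w
    unfolding B_def using tvs_box_radial[OF tvs U(1,3) \<open>0 < \<delta>\<close>] .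
  have "convex G"
    unfolding G_def B_def using E(1) U(2)
    by (intro convex_set_plus convex_translation_subtract convex_Times convex_ball)
  moreover have "0 \<in> G"
    using U(3) \<open>0 < \<delta>\<close> by (intro B_G) (simp add: B_def zero_prod_def)
  moreover have "d \<notin> G"
  proof
    assume "d \<in> G"
    then obtain e b where "e \<in> E" "b \<in> B" "d = (e - e1) + b"
      by (auto simp: G_def elim: set_plus_elim)
    moreover from this have "(x0, t0) - b = e" by (simp add: d_def algebra_simps)
    ultimately show False using disjoint by (auto simp: B_def)
  qed
  ultimately obtain L :: "'x \<times> real \<Rightarrow> real"
    where L: "linear L" "\<And>g. g \<in> G \<Longrightarrow> L g \<le> 1" "1 \<le> L d"
    using convex_radial_separation[of G d] B_radial B_G by blast
  define \<phi> where "\<phi> x = L (x, 0)" for x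
  define c where "c = L (0, 1)"
  have L_split: "L (x, s) = \<phi> x + c * s" for x s
  proof -
    have "L (x, s) = L ((x, 0) + s *\<^sub>R (0, 1))" by simp
    also have "\<dots> = \<phi> x + c * s"
      by (simp only: linear_add[OF L(1)] linear_scale[OF L(1)]) (simp add: \<phi>_def c_def)
    finally show ?thesis .
  qed
  have "linear (\<lambda>x::'x. (x, 0::real))" by (rule linearI) simp_all
  then have "linear \<phi>"
    unfolding \<phi>_def using linear_compose[OF _ L(1)] by (simp add: o_def)
  moreover have "continuous_on UNIV \<phi>"
  proof (rule tvs_linear_continuous_if_bounded_on_nbhd[OF tvs \<open>linear \<phi>\<close> U(1,3)])
    show "\<phi> u \<le> 1" if "u \<in> U" for u
      using L(2)[OF B_G] that \<open>0 < \<delta>\<close> by (simp add: \<phi>_def B_def)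
  qed
  ultimately have "\<phi> \<in> topdual" by (simp add: topdual_def)
  obtain l where l: "0 < l" "(1 / l) *\<^sub>R d \<in> B" using B_radial by blast
  define b where "b = (1 / l) *\<^sub>R d"
  have "0 < L b"
    using L(3) l(1) by (simp add: b_def linear_scale[OF L(1)] zero_less_mult_iff)
  have "\<phi> x + c * s \<le> L (x0, t0) - L b" if "(x, s) \<in> E" for x s
  proof -
    have "((x, s) - e1) + b \<in> G"
      unfolding G_def b_def using set_plus_intro[OF imageI[OF that] l(2)] by simp
    then have "L (x, s) - L e1 + L b \<le> 1"
      using L(2) linear_add[OF L(1)] linear_diff[OF L(1)] by metis
    also have "1 \<le> L (x0, t0) - L e1"
      using L(3) by (simp add: d_def linear_diff[OF L(1)])
    finally have "L (x, s) + L b \<le> L (x0, t0)" by simp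
    then show ?thesis by (simp add: L_split)
  qed
  moreover have "L (x0, t0) - L b < \<phi> x0 + c * t0"
    using \<open>0 < L b\<close> by (simp add: L_split)
  ultimately show ?thesis using \<open>\<phi> \<in> topdual\<close> by blast
qed

section \<open>Continuous affine minorants of convex functions\<close>

lemma topdual_scale: "\<phi> \<in> topdual \<Longrightarrow> (\<lambda>x. a * \<phi> x) \<in> topdual"
  using linear_compose_scale_right[of \<phi> a]
  by (simp add: topdual_def continuous_intros)

lemma topdual_add: "\<phi> \<in> topdual \<Longrightarrow> \<psi> \<in> topdual \<Longrightarrow> (\<lambda>x. \<phi> x + \<psi> x) \<in> topdual"
  by (simp add: topdual_def linear_compose_add continuous_intros)

lemma topdual_uminus: "\<phi> \<in> topdual \<Longrightarrow> (\<lambda>x. - \<phi> x) \<in> topdual"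
  by (simp add: topdual_def linear_compose_neg continuous_intros)

lemma epigraph_separation:
  fixes f :: "'x::{real_vector,topological_space} \<Rightarrow> ereal"
  assumes lc: "locally_convex_tvs TYPE('x)" and proper: "proper_fun f"
    and convex: "convex_efun f" and lsc: "lsc_efun f" and below: "ereal t0 < f x0"
  shows "\<exists>\<phi>\<in>topdual. \<exists>c \<alpha>. c \<le> 0 \<and> (\<forall>x s. f x \<le> ereal s \<longrightarrow> \<phi> x + c * s \<le> \<alpha>)
           \<and> \<alpha> < \<phi> x0 + c * t0"
proof -
  have tvs: "tvs TYPE('x)" using lc by (simp add: locally_convex_tvs_def)
  define E where "E = {(x, t::real). f x \<le> ereal t}"
  obtain x1 r where r: "f x1 = ereal r"
    using proper by (auto simp: proper_fun_def) (metis ereal_cases)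
  obtain c0 where c0: "t0 < c0" "ereal c0 < f x0"
    using ereal_dense2[OF below] by auto
  define V where "V = (\<lambda>x. (-1) *\<^sub>R (x - x0)) -` (- {x. f x \<le> ereal c0})"
  have "open (- {x. f x \<le> ereal c0})"
    using lsc by (simp add: lsc_efun_def open_Compl)
  then have "open V"
    using tvs_continuous_affine[OF tvs, of "-1" x0] by (simp add: V_def continuous_on_open_vimage)
  moreover have "0 \<in> V" using c0(2) by (simp add: V_def not_le)
  ultimately obtain U where U: "open U" "convex U" "0 \<in> U" "U \<subseteq> V"
    using lc unfolding locally_convex_tvs_def by blast
  have "(x0, t0) - b \<notin> E" if "b \<in> U \<times> ball 0 (c0 - t0)" for b
  proof
    obtain u s where b: "b = (u, s)" by (cases b)
    with that have u: "u \<in> U" and s: "\<bar>s\<bar> < c0 - t0" by (auto simp: dist_real_def)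
    assume "(x0, t0) - b \<in> E"
    then have "f (x0 - u) \<le> ereal c0"
      using s by (auto simp: E_def b intro: order_trans)
    then show False using u U(4) by (auto simp: V_def)
  qed
  moreover have "convex E" using convex by (simp add: convex_efun_def E_def)
  moreover have "(x1, r) \<in> E" using r by (simp add: E_def)
  ultimately obtain \<phi> c \<alpha> where \<phi>: "\<phi> \<in> topdual"
    and sep: "\<And>x s. f x \<le> ereal s \<Longrightarrow> \<phi> x + c * s \<le> \<alpha>" and "\<alpha> < \<phi> x0 + c * t0"
    using tvs_separation_from_box_nbhd[OF tvs U(1-3), of "c0 - t0" E "(x1, r)" x0 t0] c0(1)
    by (auto simp: E_def)
  moreover have "c \<le> 0"
  proof (rule ccontr)
    assume "\<not> c \<le> 0"
    define s where "s = max r ((\<alpha> - \<phi> x1) / c + 1)"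
    have "\<phi> x1 + c * s \<le> \<alpha>" using sep[of x1 s] r by (simp add: s_def)
    moreover have "\<alpha> - \<phi> x1 + c = c * ((\<alpha> - \<phi> x1) / c + 1)"
      using \<open>\<not> c \<le> 0\<close> by (simp add: field_simps)
    moreover have "\<dots> \<le> c * s"
      using \<open>\<not> c \<le> 0\<close> by (intro mult_left_mono) (auto simp: s_def)
    ultimately show False using \<open>\<not> c \<le> 0\<close> by linarith
  qed
  ultimately show ?thesis by blast
qed

definition continuous_affine_minorant ::
  "('x::{real_vector,topological_space} \<Rightarrow> ereal) \<Rightarrow> ('x \<Rightarrow> real) \<Rightarrow> real \<Rightarrow> bool" where
  "continuous_affine_minorant f \<phi> \<beta> \<longleftrightarrow> \<phi> \<in> topdual \<and> (\<forall>x. ereal (\<phi> x + \<beta>) \<le> f x)"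

lemma proper_fun_ereal_le:
  assumes "proper_fun f" and "\<And>s. f x = ereal s \<Longrightarrow> r \<le> s"
  shows "ereal r \<le> f x"
  using assms by (cases "f x") (auto simp: proper_fun_def)

lemma nonvertical_separation_minorant:
  assumes proper: "proper_fun f" and \<phi>: "\<phi> \<in> topdual" and c: "c < 0"
    and sep: "\<And>x s. f x \<le> ereal s \<Longrightarrow> \<phi> x + c * s \<le> \<alpha>" and strict: "\<alpha> < \<phi> x0 + c * t0"
  shows "\<exists>\<psi> \<beta>. continuous_affine_minorant f \<psi> \<beta> \<and> t0 < \<psi> x0 + \<beta>"
proof (intro exI conjI)
  show "continuous_affine_minorant f (\<lambda>x. (1 / - c) * \<phi> x) (\<alpha> / c)"
    unfolding continuous_affine_minorant_def
  proof (intro conjI allI topdual_scale[OF \<phi>] proper_fun_ereal_le[OF proper])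
    fix x s assume "f x = ereal s"
    then have "\<phi> x + c * s \<le> \<alpha>" using sep by simp
    then show "1 / - c * \<phi> x + \<alpha> / c \<le> s" using c by (simp add: field_simps)
  qed
  show "t0 < 1 / - c * \<phi> x0 + \<alpha> / c" using c strict by (simp add: field_simps)
qed

lemma exists_continuous_affine_minorant:
  fixes f :: "'x::{real_vector,topological_space} \<Rightarrow> ereal"
  assumes lc: "locally_convex_tvs TYPE('x)" and proper: "proper_fun f"
    and convex: "convex_efun f" and lsc: "lsc_efun f"
  shows "\<exists>\<phi> \<beta>. continuous_affine_minorant f \<phi> \<beta>"
proof -
  obtain x1 r where r: "f x1 = ereal r"
    using proper by (auto simp: proper_fun_def) (metis ereal_cases)
  then obtain \<phi> c \<alpha> where \<phi>: "\<phi> \<in> topdual"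
    and sep: "\<And>x s. f x \<le> ereal s \<Longrightarrow> \<phi> x + c * s \<le> \<alpha>" and strict: "\<alpha> < \<phi> x1 + c * (r - 1)"
    using epigraph_separation[OF lc proper convex lsc, of "r - 1" x1] by auto
  have "c < 0" using sep[of x1 r] r strict by (simp add: algebra_simps)
  then show ?thesis
    using nonvertical_separation_minorant[OF proper \<phi> _ sep strict] by blast
qed

text \<open>If the separating hyperplane at \<open>(x0, t0)\<close> is vertical, a large multiple of it is added to
  an arbitrary continuous affine minorant.\<close>

lemma continuous_affine_minorant_above:
  fixes f :: "'x::{real_vector,topological_space} \<Rightarrow> ereal"
  assumes lc: "locally_convex_tvs TYPE('x)" and proper: "proper_fun f"
    and convex: "convex_efun f" and lsc: "lsc_efun f" and below: "ereal t0 < f x0"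
  shows "\<exists>\<phi> \<beta>. continuous_affine_minorant f \<phi> \<beta> \<and> t0 < \<phi> x0 + \<beta>"
proof -
  obtain \<phi> c \<alpha> where \<phi>: "\<phi> \<in> topdual" and "c \<le> 0"
    and sep: "\<And>x s. f x \<le> ereal s \<Longrightarrow> \<phi> x + c * s \<le> \<alpha>" and strict: "\<alpha> < \<phi> x0 + c * t0"
    using epigraph_separation[OF lc proper convex lsc below] by auto
  show ?thesis
  proof (cases "c < 0")
    case True
    then show ?thesis using nonvertical_separation_minorant[OF proper \<phi> _ sep strict] by blast
  next
    case False
    with \<open>c \<le> 0\<close> have "c = 0" by simp
    obtain \<phi>1 \<beta>1 where \<phi>1: "\<phi>1 \<in> topdual" and minorant1: "\<And>x. ereal (\<phi>1 x + \<beta>1) \<le> f x"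
      using exists_continuous_affine_minorant[OF lc proper convex lsc]
      by (auto simp: continuous_affine_minorant_def)
    have gap: "0 < \<phi> x0 - \<alpha>" using strict \<open>c = 0\<close> by simp
    define k where "k = \<bar>t0 - \<phi>1 x0 - \<beta>1\<bar> / (\<phi> x0 - \<alpha>) + 1"
    have "0 \<le> k" using gap by (simp add: k_def)
    have "k * (\<phi> x0 - \<alpha>) = \<bar>t0 - \<phi>1 x0 - \<beta>1\<bar> + (\<phi> x0 - \<alpha>)"
      using gap by (simp add: k_def field_simps)
    then have "t0 < \<phi>1 x0 + \<beta>1 + k * (\<phi> x0 - \<alpha>)" using gap by linarith
    moreover have "continuous_affine_minorant f (\<lambda>x. \<phi>1 x + k * \<phi> x) (\<beta>1 - k * \<alpha>)"
      unfolding continuous_affine_minorant_def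
    proof (intro conjI allI topdual_add[OF \<phi>1 topdual_scale[OF \<phi>]] proper_fun_ereal_le[OF proper])
      fix x s assume fx: "f x = ereal s"
      then have "k * \<phi> x \<le> k * \<alpha>"
        using sep[of x s] \<open>c = 0\<close> \<open>0 \<le> k\<close> by (simp add: mult_left_mono)
      moreover have "\<phi>1 x + \<beta>1 \<le> s" using minorant1[of x] fx by simp
      ultimately show "\<phi>1 x + k * \<phi> x + (\<beta>1 - k * \<alpha>) \<le> s" by linarith
    qed
    ultimately show ?thesis by (intro exI[of _ "\<lambda>x. \<phi>1 x + k * \<phi> x"]) (auto simp: algebra_simps)
  qed
qed

section \<open>Dual representation of the risk measure\<close>

lemma sigmaA_le_zero:
  assumes "0 \<in> A" and "linear \<psi>"
  shows "sigmaA A \<psi> \<le> 0"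
proof -
  have "ereal (\<psi> 0) \<in> {ereal (\<psi> X) | X. X \<in> A}" using assms(1) by blast
  then show ?thesis
    unfolding sigmaA_def by (rule Inf_lower2) (simp add: linear_0[OF assms(2)])
qed

lemma sigmaPV_le_zero:
  assumes "0 \<in> P" and "V0 0 = 0" and "V1 0 = 0" and "linear \<psi>"
  shows "sigmaPV P V0 V1 \<psi> \<le> 0"
proof -
  have "ereal (V0 0 - \<psi> (V1 0)) \<in> {ereal (V0 x - \<psi> (V1 x)) | x. x \<in> P}" using assms(1) by blast
  then show ?thesis
    unfolding sigmaPV_def by (rule Inf_lower2) (simp add: assms(2,3) linear_0[OF assms(4)])
qed

lemma dual_value_le_risk:
  assumes "0 \<in> P" and "V0 0 = 0" and "V1 0 = 0" and "0 \<in> A" and \<psi>: "\<psi> \<in> dualD A P V0 V1"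
  shows "sigmaA A \<psi> + sigmaPV P V0 V1 \<psi> - ereal (\<psi> X) \<le> risk P V0 V1 A X"
proof -
  have lin: "linear \<psi>" using \<psi> by (simp add: dualD_def topdual_def)
  obtain a b where a: "sigmaA A \<psi> = ereal a" and b: "sigmaPV P V0 V1 \<psi> = ereal b"
    using \<psi> sigmaA_le_zero[OF assms(4) lin] sigmaPV_le_zero[of P V0 V1, OF assms(1-3) lin]
    by (cases "sigmaA A \<psi>"; cases "sigmaPV P V0 V1 \<psi>") (auto simp: dualD_def)
  have "ereal (a + b - \<psi> X) \<le> risk P V0 V1 A X"
    unfolding risk_def
  proof (rule Inf_greatest, clarify)
    fix x assume x: "x \<in> P" "X + V1 x \<in> A"
    have "sigmaA A \<psi> \<le> ereal (\<psi> (X + V1 x))"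
      unfolding sigmaA_def using x(2) by (intro Inf_lower) blast
    then have "a \<le> \<psi> X + \<psi> (V1 x)" using a by (simp add: linear_add[OF lin])
    moreover have "sigmaPV P V0 V1 \<psi> \<le> ereal (V0 x - \<psi> (V1 x))"
      unfolding sigmaPV_def using x(1) by (intro Inf_lower) blast
    then have "b \<le> V0 x - \<psi> (V1 x)" using b by simp
    ultimately show "ereal (a + b - \<psi> X) \<le> ereal (V0 x)" by simp
  qed
  then show ?thesis using a b by simp
qed

lemma continuous_affine_minorant_risk_dualD:
  assumes "0 \<in> P" and "V0 0 = 0" and "V1 0 = 0" and "0 \<in> A"
    and minorant: "continuous_affine_minorant (risk P V0 V1 A) \<phi> \<beta>"
  defines "\<psi> \<equiv> \<lambda>Y. - \<phi> Y"
  shows "\<psi> \<in> dualD A P V0 V1"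
    and "ereal (\<phi> X + \<beta>) \<le> sigmaA A \<psi> + sigmaPV P V0 V1 \<psi> - ereal (\<psi> X)"
proof -
  have \<phi>: "\<phi> \<in> topdual" using minorant by (simp add: continuous_affine_minorant_def)
  then have \<psi>: "\<psi> \<in> topdual" and lin: "linear \<psi>"
    using topdual_uminus by (auto simp: \<psi>_def topdual_def)
  have bound: "ereal (\<beta> - (V0 x - \<psi> (V1 x))) \<le> sigmaA A \<psi>" if "x \<in> P" for x
    unfolding sigmaA_def
  proof (rule Inf_greatest, clarify)
    fix Y assume "Y \<in> A"
    have "ereal (\<phi> (Y - V1 x) + \<beta>) \<le> risk P V0 V1 A (Y - V1 x)"
      using minorant by (simp add: continuous_affine_minorant_def)
    also have "\<dots> \<le> ereal (V0 x)"
      unfolding risk_def using that \<open>Y \<in> A\<close> by (intro Inf_lower) auto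
    finally show "ereal (\<beta> - (V0 x - \<psi> (V1 x))) \<le> ereal (\<psi> Y)"
      using \<phi> by (simp add: \<psi>_def topdual_def linear_diff)
  qed
  obtain a where a: "sigmaA A \<psi> = ereal a"
    using bound[OF assms(1)] sigmaA_le_zero[OF assms(4) lin] assms(2,3) linear_0[OF lin]
    by (cases "sigmaA A \<psi>") auto
  have "ereal (\<beta> - a) \<le> sigmaPV P V0 V1 \<psi>"
    unfolding sigmaPV_def using bound a by (intro Inf_greatest) force
  then obtain b where b: "sigmaPV P V0 V1 \<psi> = ereal b" "\<beta> - a \<le> b"
    using sigmaPV_le_zero[of P V0 V1, OF assms(1-3) lin] by (cases "sigmaPV P V0 V1 \<psi>") auto
  show "\<psi> \<in> dualD A P V0 V1" using \<psi> a b by (simp add: dualD_def)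
  show "ereal (\<phi> X + \<beta>) \<le> sigmaA A \<psi> + sigmaPV P V0 V1 \<psi> - ereal (\<psi> X)"
    using a b by (simp add: \<psi>_def)
qed

lemma risk_le_dual_SUP:
  assumes lc: "locally_convex_tvs TYPE('x::{real_vector,topological_space})"
    and "0 \<in> P" and "V0 0 = 0" and "V1 0 = 0" and "0 \<in> A"
    and proper: "proper_fun (risk P V0 V1 A)" and convex: "convex_efun (risk P V0 V1 A)"
    and lsc: "lsc_efun (risk P V0 V1 A)"
  shows "risk P V0 V1 A (X::'x)
           \<le> (SUP \<psi>\<in>dualD A P V0 V1. sigmaA A \<psi> + sigmaPV P V0 V1 \<psi> - ereal (\<psi> X))"
proof (rule dense_le)
  fix y assume "y < risk P V0 V1 A X"
  then obtain t where "y < ereal t" "ereal t < risk P V0 V1 A X"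
    using ereal_dense2 by blast
  obtain \<phi> \<beta> where minorant: "continuous_affine_minorant (risk P V0 V1 A) \<phi> \<beta>"
    and "t < \<phi> X + \<beta>"
    using continuous_affine_minorant_above[OF lc proper convex lsc \<open>ereal t < _\<close>] by blast
  note dual = continuous_affine_minorant_risk_dualD[of P V0 V1 A, OF assms(2-5) minorant]
  have "y \<le> ereal (\<phi> X + \<beta>)"
    using order.strict_trans[OF \<open>y < ereal t\<close>, of "ereal (\<phi> X + \<beta>)"] \<open>t < \<phi> X + \<beta>\<close> by simp
  also have "\<dots> \<le> sigmaA A (\<lambda>Y. - \<phi> Y) + sigmaPV P V0 V1 (\<lambda>Y. - \<phi> Y) - ereal (- \<phi> X)"
    by (rule dual(2))
  finally show "y \<le> (SUP \<psi>\<in>dualD A P V0 V1. sigmaA A \<psi> + sigmaPV P V0 V1 \<psi> - ereal (\<psi> X))"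
    by (rule SUP_upper2[OF dual(1)])
qed

theorem mainTheorem16:
  fixes Xp :: "'x::{real_vector,topological_space} set"
    and P :: "(real^'n) set"
    and V0 :: "real^'n \<Rightarrow> real"
    and V1 :: "real^'n \<Rightarrow> 'x"
    and A :: "'x set"
  assumes lc: "locally_convex_tvs TYPE('x)"
    and cone: "convex_cone Xp"
    and P0: "0 \<in> P"
    and V00: "V0 0 = 0"
    and V0sym: "\<And>x. V0 x \<ge> - V0 (- x)"
    and V10: "V1 0 = 0"
    and V1sym: "\<And>x. (- V1 (- x)) - V1 x \<in> Xp"
    and A0: "0 \<in> A"
    and Amono: "\<And>X Y. X \<in> A \<Longrightarrow> Y \<in> Xp \<Longrightarrow> X + Y \<in> A"
    and proper: "proper_fun (risk P V0 V1 A)"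
    and convex: "convex_efun (risk P V0 V1 A)"
    and lsc: "lsc_efun (risk P V0 V1 A)"
  shows "dualD A P V0 V1 \<noteq> {} \<and>
         (\<forall>X. risk P V0 V1 A X =
              (SUP \<psi>\<in>dualD A P V0 V1. sigmaA A \<psi> + sigmaPV P V0 V1 \<psi> - ereal (\<psi> X)))"
proof
  obtain \<phi> \<beta> where "continuous_affine_minorant (risk P V0 V1 A) \<phi> \<beta>"
    using exists_continuous_affine_minorant[OF lc proper convex lsc] by blast
  then show "dualD A P V0 V1 \<noteq> {}"
    using continuous_affine_minorant_risk_dualD(1)[of P V0 V1 A, OF P0 V00 V10 A0] by blast
  show "\<forall>X. risk P V0 V1 A X =
              (SUP \<psi>\<in>dualD A P V0 V1. sigmaA A \<psi> + sigmaPV P V0 V1 \<psi> - ereal (\<psi> X))"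
    using dual_value_le_risk[of P V0 V1 A, OF P0 V00 V10 A0]
      risk_le_dual_SUP[of P V0 V1 A, OF lc P0 V00 V10 A0 proper convex lsc]
    by (blast intro: antisym SUP_least)
qed

end
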